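(* Let $G$ be a simple undirected graph with vertices $v_1,\dots,v_n$ and let $G^d$ be a digraph whose underlying undirected graph is $G$ (an orientation of each edge of $G$), with edges $e_1,\dots,e_m$. Then the ideal $I(E)_{G^d}$ is generated by the binomials $f_C$, where $C$ ranges over the cycles of $G$.
   Context: $K$ is a field of characteristic zero; $[v_i,v_j]$ is the directed edge from $v_i$ to $v_j$. $I(E)_{G^d}=I(G^d,E)\cap K[e_1,\dots,e_m]$, where $I(G^d,E)\subseteq K[e_1,\dots,e_m,v_1,\dots,v_n,z_1,\dots,z_n]$ is generated by $e_h-z_iv_j$ for each edge $e_h=[v_i,v_j]$ of $G^d$ and $z_iv_i-1$, $i=1,\dots,n$. For a cycle $C$ of $G$ with vertices $v_{i(1)},\dots,v_{i(q)}$ (distinct) and edges $e_{h_1},\dots,e_{h_q}$, $e_{h_k}$ joining $v_{i(k)}$ and $v_{i(k+1)}$ ($v_{i(q+1)}=v_{i(1)}$), let $I$ be the set of $h_k$ with $e_{h_k}=[v_{i(k)},v_{i(k+1)}]$ in $G^d$ and $J$ the remaining indices; $f_C=\prod_{h\in I}e_h-\prod_{h\in J}e_h$ (empty product $=1$). *)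

theory Defs
  imports Main "HOL-Library.Poly_Mapping"
begin

(* Variables of the big polynomial ring K[e_1..e_m, v_1..v_n, z_1..z_n] *)
datatype var = EV nat | VV nat | ZV nat

type_synonym 'k mpoly = "(var \<Rightarrow>\<^sub>0 nat) \<Rightarrow>\<^sub>0 'k"

definition Var :: "var \<Rightarrow> 'k::comm_ring_1 mpoly" where
  "Var x = Poly_Mapping.single (Poly_Mapping.single x 1) 1"

definition Ering :: "nat \<Rightarrow> 'k::comm_ring_1 mpoly set" where
  "Ering m = {p::'k mpoly. \<forall>mon \<in> Poly_Mapping.keys p. \<forall>x \<in> Poly_Mapping.keys mon. \<exists>h \<in> {1..m}. x = EV h}"

definition ideal_gen :: "'a::comm_ring_1 set \<Rightarrow> 'a set \<Rightarrow> 'a set" where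
  "ideal_gen R S = {p. \<exists>F r. finite F \<and> F \<subseteq> S \<and> (\<forall>s\<in>F. r s \<in> R) \<and> p = (\<Sum>s\<in>F. r s * s)}"

(* The digraph G^d: vertices 1..n, edges 1..m, edge h = [v_(src h), v_(tgt h)].
   Its underlying graph G is simple: no loops, no two edges joining the same pair. *)
definition simple_orientation :: "nat \<Rightarrow> nat \<Rightarrow> (nat \<Rightarrow> nat) \<Rightarrow> (nat \<Rightarrow> nat) \<Rightarrow> bool" where
  "simple_orientation n m src tgt \<longleftrightarrow>
     (\<forall>h \<in> {1..m}. src h \<in> {1..n} \<and> tgt h \<in> {1..n} \<and> src h \<noteq> tgt h) \<and>
     (\<forall>h \<in> {1..m}. \<forall>h' \<in> {1..m}. {src h, tgt h} = {src h', tgt h'} \<longrightarrow> h = h')"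

definition toric_gens :: "nat \<Rightarrow> nat \<Rightarrow> (nat \<Rightarrow> nat) \<Rightarrow> (nat \<Rightarrow> nat) \<Rightarrow> 'k::comm_ring_1 mpoly set" where
  "toric_gens n m src tgt =
     {Var (EV h) - Var (ZV (src h)) * Var (VV (tgt h)) | h. h \<in> {1..m}} \<union>
     {Var (ZV i) * Var (VV i) - 1 | i. i \<in> {1..n}}"

definition IE :: "nat \<Rightarrow> nat \<Rightarrow> (nat \<Rightarrow> nat) \<Rightarrow> (nat \<Rightarrow> nat) \<Rightarrow> 'k::comm_ring_1 mpoly set" where
  "IE n m src tgt = ideal_gen UNIV (toric_gens n m src tgt) \<inter> Ering m"

definition is_cycle :: "nat \<Rightarrow> nat \<Rightarrow> (nat \<Rightarrow> nat) \<Rightarrow> (nat \<Rightarrow> nat) \<Rightarrow> nat list \<Rightarrow> nat list \<Rightarrow> bool" where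
  "is_cycle n m src tgt vs es \<longleftrightarrow>
     length es = length vs \<and> 3 \<le> length vs \<and> distinct vs \<and> set vs \<subseteq> {1..n} \<and>
     (\<forall>k < length vs. es ! k \<in> {1..m} \<and>
        {src (es ! k), tgt (es ! k)} = {vs ! k, vs ! ((k + 1) mod length vs)})"

definition fC :: "(nat \<Rightarrow> nat) \<Rightarrow> (nat \<Rightarrow> nat) \<Rightarrow> nat list \<Rightarrow> nat list \<Rightarrow> 'k::comm_ring_1 mpoly" where
  "fC src tgt vs es =
     (let q = length vs;
          I = {k. k < q \<and> src (es ! k) = vs ! k \<and> tgt (es ! k) = vs ! ((k + 1) mod q)};
          J = {k. k < q} - I
      in (\<Prod>k\<in>I. Var (EV (es ! k))) - (\<Prod>k\<in>J. Var (EV (es ! k))))"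

end

theory Submission
  imports Defs
begin

text \<open>Modulo \<open>I(G\<^sup>d,E)\<close> one has \<open>z\<^sub>i = v\<^sub>i\<^sup>-\<^sup>1\<close> and \<open>e\<^sub>h = v\<^bsub>tgt h\<^esub> / v\<^bsub>src h\<^esub>\<close>, so every
  monomial becomes a Laurent monomial \<open>v\<^sup>w\<close>; its exponent \<open>w\<close> is the toric degree. Two
  consequences: an element of the ideal has, for every \<open>w\<close>, coefficients summing to zero over its
  monomials of degree \<open>w\<close>; and two monomials \<open>e\<^sup>A\<close>, \<open>e\<^sup>B\<close> of equal degree, i.e. with \<open>A\<close> and \<open>B\<close>
  having the same net inflow at every vertex, are congruent. Hence \<open>I(E)\<^bsub>G\<^sup>d\<^esub>\<close> is spanned over
  \<open>K[e]\<close> by such binomials \<open>e\<^sup>A - e\<^sup>B\<close>, and each \<open>f\<^sub>C\<close> is one of them.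

  Conversely, let \<open>A \<noteq> B\<close> have equal net inflow. Orient every edge \<open>h\<close> with \<open>A h \<noteq> B h\<close> along
  \<open>h\<close> if \<open>A h > B h\<close> and against \<open>h\<close> otherwise. Equal net inflow makes every vertex with an
  incoming arc have an outgoing one, so this digraph contains a cycle \<open>C\<close>, whose forward edges
  \<open>I\<close> lie where \<open>A\<close> exceeds \<open>B\<close> and backward edges \<open>J\<close> where \<open>B\<close> exceeds \<open>A\<close>. Writing
  \<open>A = 1\<^sub>I + A'\<close> and \<open>B = 1\<^sub>J + B'\<close> gives \<open>e\<^sup>A - e\<^sup>B = e\<^sup>A\<^sup>' f\<^sub>C + e\<^sup>J (e\<^sup>A\<^sup>' - e\<^sup>B\<^sup>')\<close>,
  where \<open>A'\<close> and \<open>B'\<close> again have equal net inflow and smaller total degree; induct.\<close>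

section \<open>Ideals generated over a subring\<close>

definition is_subring :: "'a::comm_ring_1 set \<Rightarrow> bool" where
  "is_subring R \<longleftrightarrow> 1 \<in> R \<and> -1 \<in> R \<and> (\<forall>x\<in>R. \<forall>y\<in>R. x + y \<in> R \<and> x * y \<in> R)"

lemma is_subring_UNIV: "is_subring UNIV"
  unfolding is_subring_def by simp

lemma ideal_genI:
  "finite F \<Longrightarrow> F \<subseteq> S \<Longrightarrow> (\<And>s. s \<in> F \<Longrightarrow> r s \<in> R) \<Longrightarrow> p = (\<Sum>s\<in>F. r s * s)
    \<Longrightarrow> p \<in> ideal_gen R S"
  unfolding ideal_gen_def by blast

lemma ideal_genE:
  assumes "p \<in> ideal_gen R S"
  obtains F r where "finite F" "F \<subseteq> S" "\<And>s. s \<in> F \<Longrightarrow> r s \<in> R" "p = (\<Sum>s\<in>F. r s * s)"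
  using assms unfolding ideal_gen_def by blast

lemma zero_in_ideal_gen: "0 \<in> ideal_gen R S"
  by (rule ideal_genI[of "{}"]) auto

lemma generator_in_ideal_gen: "s \<in> S \<Longrightarrow> 1 \<in> R \<Longrightarrow> s \<in> ideal_gen R S"
  by (rule ideal_genI[of "{s}" _ "\<lambda>_. 1"]) auto

lemma ideal_gen_add:
  assumes R: "is_subring R" and p: "p \<in> ideal_gen R S" and q: "q \<in> ideal_gen R S"
  shows "p + q \<in> ideal_gen R S"
proof -
  obtain F r where F: "finite F" "F \<subseteq> S" "\<And>s. s \<in> F \<Longrightarrow> r s \<in> R" "p = (\<Sum>s\<in>F. r s * s)"
    using p by (blast elim: ideal_genE)
  obtain G r' where G: "finite G" "G \<subseteq> S" "\<And>s. s \<in> G \<Longrightarrow> r' s \<in> R" "q = (\<Sum>s\<in>G. r' s * s)"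
    using q by (blast elim: ideal_genE)
  define c where "c s = (if s \<in> F then r s else 0) + (if s \<in> G then r' s else 0)" for s
  have "p = (\<Sum>s\<in>F \<union> G. (if s \<in> F then r s else 0) * s)"
    unfolding F(4) by (rule sum.mono_neutral_cong_left) (use F G in auto)
  moreover have "q = (\<Sum>s\<in>F \<union> G. (if s \<in> G then r' s else 0) * s)"
    unfolding G(4) by (rule sum.mono_neutral_cong_left) (use F G in auto)
  ultimately have "p + q = (\<Sum>s\<in>F \<union> G. c s * s)"
    by (simp add: c_def distrib_right sum.distrib)
  moreover have "c s \<in> R" if "s \<in> F \<union> G" for s
    using R F(3) G(3) that unfolding c_def is_subring_def by auto
  ultimately show ?thesis
    using F G by (intro ideal_genI[of "F \<union> G" _ c]) auto
qed

lemma ideal_gen_mult: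
  assumes R: "is_subring R" and c: "c \<in> R" and p: "p \<in> ideal_gen R S"
  shows "c * p \<in> ideal_gen R S"
proof -
  obtain F r where F: "finite F" "F \<subseteq> S" "\<And>s. s \<in> F \<Longrightarrow> r s \<in> R" "p = (\<Sum>s\<in>F. r s * s)"
    using p by (blast elim: ideal_genE)
  have "c * p = (\<Sum>s\<in>F. (c * r s) * s)"
    using F by (simp add: sum_distrib_left mult.assoc)
  then show ?thesis
    using R c F unfolding is_subring_def by (intro ideal_genI[of F _ "\<lambda>s. c * r s"]) auto
qed

lemma ideal_gen_diff:
  assumes R: "is_subring R" and p: "p \<in> ideal_gen R S" and q: "q \<in> ideal_gen R S"
  shows "p - q \<in> ideal_gen R S"
proof -
  have "-1 \<in> R" using R unfolding is_subring_def by blast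
  then show ?thesis using ideal_gen_add[OF R p ideal_gen_mult[OF R _ q]] by fastforce
qed

lemma ideal_gen_sum:
  assumes "is_subring R" and "\<And>x. x \<in> F \<Longrightarrow> g x \<in> ideal_gen R S"
  shows "(\<Sum>x\<in>F. g x) \<in> ideal_gen R S"
  using assms(2)
  by (induction F rule: infinite_finite_induct)
    (auto intro: zero_in_ideal_gen ideal_gen_add[OF assms(1)])

section \<open>Monomials and the subring \<open>K[e]\<close>\<close>

lemma Ering_iff:
  "(p::'k::comm_ring_1 mpoly) \<in> Ering m
    \<longleftrightarrow> (\<forall>mon\<in>Poly_Mapping.keys p. Poly_Mapping.keys mon \<subseteq> EV ` {1..m})"
  unfolding Ering_def by blast

lemma zero_in_Ering: "0 \<in> Ering m"
  unfolding Ering_iff by simp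

lemma single_zero_in_Ering: "Poly_Mapping.single 0 c \<in> Ering m"
  unfolding Ering_iff by simp

lemma Ering_add: "p \<in> Ering m \<Longrightarrow> q \<in> Ering m \<Longrightarrow> p + q \<in> Ering m"
  unfolding Ering_iff by (meson Un_iff keys_add subsetD)

lemma Ering_diff: "p \<in> Ering m \<Longrightarrow> q \<in> Ering m \<Longrightarrow> p - q \<in> Ering m"
  unfolding Ering_iff by (meson Un_iff keys_diff subsetD)

lemma Ering_mult:
  assumes "p \<in> Ering m" and "q \<in> Ering m"
  shows "p * q \<in> Ering m"
  unfolding Ering_iff
proof
  fix mon assume "mon \<in> Poly_Mapping.keys (p * q)"
  then obtain a b where "a \<in> Poly_Mapping.keys p" "b \<in> Poly_Mapping.keys q" "mon = a + b"
    using keys_mult by blast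
  then show "Poly_Mapping.keys mon \<subseteq> EV ` {1..m}"
    using assms keys_add[of a b] unfolding Ering_iff by blast
qed

lemma is_subring_Ering: "is_subring (Ering m)"
proof -
  have "1 \<in> Ering m" "-1 \<in> Ering m"
    using single_zero_in_Ering[of 1 m] single_zero_in_Ering[of "-1" m]
    by (simp_all add: one_poly_mapping_def single_uminus)
  then show ?thesis unfolding is_subring_def by (simp add: Ering_add Ering_mult)
qed

lemma Ering_sum: "(\<And>x. x \<in> F \<Longrightarrow> g x \<in> Ering m) \<Longrightarrow> (\<Sum>x\<in>F. g x) \<in> Ering m"
  by (induction F rule: infinite_finite_induct) (simp_all add: Ering_add zero_in_Ering)

lemma Ering_prod: "(\<And>x. x \<in> F \<Longrightarrow> g x \<in> Ering m) \<Longrightarrow> (\<Prod>x\<in>F. g x) \<in> Ering m"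
  using is_subring_Ering[of m] unfolding is_subring_def
  by (induction F rule: infinite_finite_induct) (auto simp: Ering_mult)

lemma Var_power:
  "(Var x :: 'k::comm_ring_1 mpoly) ^ k = Poly_Mapping.single (Poly_Mapping.single x k) 1"
  by (induction k) (simp_all add: Var_def mult_single flip: single_add)

lemma poly_mapping_sum_single:
  "p = (\<Sum>mon\<in>Poly_Mapping.keys p. Poly_Mapping.single mon (Poly_Mapping.lookup p mon))"
  by (rule poly_mapping_eqI) (simp add: lookup_sum lookup_single when_def in_keys_iff)

lemma single_sum:
  "Poly_Mapping.single k (\<Sum>x\<in>A. f x) = (\<Sum>x\<in>A. Poly_Mapping.single k (f x))"
  by (induction A rule: infinite_finite_induct) (simp_all add: single_add)

lemma prod_single_one:
  "(\<Prod>x\<in>F. Poly_Mapping.single (g x) (1::'k::comm_ring_1)) = Poly_Mapping.single (\<Sum>x\<in>F. g x) 1"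
  by (induction F rule: infinite_finite_induct) (simp_all add: mult_single)

definition edge_monomial :: "nat \<Rightarrow> (nat \<Rightarrow> nat) \<Rightarrow> 'k::comm_ring_1 mpoly" where
  "edge_monomial m A = (\<Prod>h\<in>{1..m}. Var (EV h) ^ A h)"

lemma edge_monomial_add:
  "edge_monomial m (\<lambda>h. A h + B h) = edge_monomial m A * edge_monomial m B"
  unfolding edge_monomial_def by (simp add: power_add prod.distrib)

lemma edge_monomial_in_Ering: "edge_monomial m A \<in> Ering m"
  unfolding edge_monomial_def Var_power by (intro Ering_prod) (auto simp: Ering_iff)

lemma edge_monomial_indicator:
  assumes "S \<subseteq> {1..m}"
  shows "edge_monomial m (\<lambda>h. of_bool (h \<in> S)) = (\<Prod>h\<in>S. Var (EV h))"
proof -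
  have "edge_monomial m (\<lambda>h. of_bool (h \<in> S))
      = (\<Prod>h\<in>{1..m}. if h \<in> S then Var (EV h) else 1)"
    unfolding edge_monomial_def by (intro prod.cong) auto
  also have "\<dots> = (\<Prod>h\<in>S. Var (EV h))"
    using assms by (simp add: prod.If_cases Int_absorb1)
  finally show ?thesis .
qed

lemma single_eq_edge_monomial:
  assumes "Poly_Mapping.keys mon \<subseteq> EV ` {1..m}"
  shows "Poly_Mapping.single mon 1 = edge_monomial m (\<lambda>h. Poly_Mapping.lookup mon (EV h))"
proof -
  have "mon = (\<Sum>h\<in>{1..m}. Poly_Mapping.single (EV h) (Poly_Mapping.lookup mon (EV h)))"
  proof (rule poly_mapping_eqI)
    fix x
    show "Poly_Mapping.lookup mon x = Poly_Mapping.lookup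
        (\<Sum>h\<in>{1..m}. Poly_Mapping.single (EV h) (Poly_Mapping.lookup mon (EV h))) x"
      using assms by (cases x) (auto simp: lookup_sum lookup_single when_def in_keys_iff)
  qed
  then show ?thesis
    unfolding edge_monomial_def Var_power by (metis (no_types) prod_single_one)
qed

section \<open>The toric degree\<close>

definition incidence :: "(nat \<Rightarrow> nat) \<Rightarrow> (nat \<Rightarrow> nat) \<Rightarrow> nat \<Rightarrow> nat \<Rightarrow> int" where
  "incidence src tgt h i = of_bool (tgt h = i) - of_bool (src h = i)"

definition net_inflow :: "nat \<Rightarrow> (nat \<Rightarrow> nat) \<Rightarrow> (nat \<Rightarrow> nat) \<Rightarrow> (nat \<Rightarrow> nat) \<Rightarrow> nat \<Rightarrow> int"
  where "net_inflow m src tgt A i = (\<Sum>h\<in>{1..m}. int (A h) * incidence src tgt h i)"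

definition toric_degree :: "nat \<Rightarrow> (nat \<Rightarrow> nat) \<Rightarrow> (nat \<Rightarrow> nat) \<Rightarrow> (var \<Rightarrow>\<^sub>0 nat) \<Rightarrow> nat \<Rightarrow> int"
  where "toric_degree m src tgt mon i =
     int (Poly_Mapping.lookup mon (VV i)) - int (Poly_Mapping.lookup mon (ZV i))
     + net_inflow m src tgt (\<lambda>h. Poly_Mapping.lookup mon (EV h)) i"

text \<open>The coefficient of \<open>v\<^sup>w\<close> in the image of \<open>p\<close> in the Laurent polynomial ring.\<close>

definition laurent_coeff ::
  "nat \<Rightarrow> (nat \<Rightarrow> nat) \<Rightarrow> (nat \<Rightarrow> nat) \<Rightarrow> (nat \<Rightarrow> int) \<Rightarrow> 'k::comm_ring_1 mpoly \<Rightarrow> 'k"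
  where "laurent_coeff m src tgt w p =
     (\<Sum>mon\<in>Poly_Mapping.keys p.
        of_bool (toric_degree m src tgt mon = w) * Poly_Mapping.lookup p mon)"

abbreviation toric_ideal :: "nat \<Rightarrow> nat \<Rightarrow> (nat \<Rightarrow> nat) \<Rightarrow> (nat \<Rightarrow> nat) \<Rightarrow> 'k::comm_ring_1 mpoly set"
  where "toric_ideal n m src tgt \<equiv> ideal_gen UNIV (toric_gens n m src tgt)"

lemma net_inflow_add:
  "net_inflow m src tgt (\<lambda>h. A h + B h) i = net_inflow m src tgt A i + net_inflow m src tgt B i"
  unfolding net_inflow_def by (simp add: distrib_right sum.distrib)

lemma net_inflow_indicator:
  assumes "S \<subseteq> {1..m}"
  shows "net_inflow m src tgt (\<lambda>h. of_bool (h \<in> S)) i = (\<Sum>h\<in>S. incidence src tgt h i)"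
proof -
  have "net_inflow m src tgt (\<lambda>h. of_bool (h \<in> S)) i
      = (\<Sum>h\<in>{1..m}. if h \<in> S then incidence src tgt h i else 0)"
    unfolding net_inflow_def by (intro sum.cong) auto
  also have "\<dots> = (\<Sum>h\<in>S. incidence src tgt h i)"
    using assms by (simp add: sum.If_cases Int_absorb1)
  finally show ?thesis .
qed

lemma toric_degree_add:
  "toric_degree m src tgt (a + b) i = toric_degree m src tgt a i + toric_degree m src tgt b i"
  unfolding toric_degree_def by (simp add: lookup_add net_inflow_add)

lemma toric_degree_single_EV:
  assumes "h \<in> {1..m}"
  shows "toric_degree m src tgt (Poly_Mapping.single (EV h) 1) i = incidence src tgt h i"
proof -
  have "net_inflow m src tgt (\<lambda>h'. Poly_Mapping.lookup (Poly_Mapping.single (EV h) 1) (EV h')) i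
      = (\<Sum>h'\<in>{1..m}. if h' = h then incidence src tgt h i else 0)"
    unfolding net_inflow_def by (rule sum.cong) (auto simp: lookup_single)
  then show ?thesis
    using assms unfolding toric_degree_def by (simp add: lookup_single)
qed

lemma toric_degree_eq_net_inflow:
  assumes "Poly_Mapping.keys mon \<subseteq> EV ` {1..m}"
  shows "toric_degree m src tgt mon = net_inflow m src tgt (\<lambda>h. Poly_Mapping.lookup mon (EV h))"
proof
  fix i
  have "VV i \<notin> Poly_Mapping.keys mon" "ZV i \<notin> Poly_Mapping.keys mon"
    using assms by auto
  then show "toric_degree m src tgt mon i
      = net_inflow m src tgt (\<lambda>h. Poly_Mapping.lookup mon (EV h)) i"
    unfolding toric_degree_def by (simp add: in_keys_iff)
qed

lemma toric_gens_homogeneous: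
  assumes "s \<in> toric_gens n m src tgt"
  obtains m1 m2 where "toric_degree m src tgt m1 = toric_degree m src tgt m2"
    and "s = Poly_Mapping.single m1 1 - Poly_Mapping.single m2 1"
proof -
  consider (edge) h where "h \<in> {1..m}" "s = Var (EV h) - Var (ZV (src h)) * Var (VV (tgt h))"
    | (vertex) i where "s = Var (ZV i) * Var (VV i) - 1"
    using assms unfolding toric_gens_def by blast
  then show ?thesis
  proof cases
    case edge
    let ?m2 = "Poly_Mapping.single (ZV (src h)) 1 + Poly_Mapping.single (VV (tgt h)) (1::nat)"
    have "toric_degree m src tgt (Poly_Mapping.single (EV h) 1) i = toric_degree m src tgt ?m2 i"
      for i
      unfolding toric_degree_single_EV[OF edge(1)] toric_degree_add
      by (simp add: incidence_def toric_degree_def net_inflow_def lookup_single when_def)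
    moreover have
      "s = Poly_Mapping.single (Poly_Mapping.single (EV h) 1) 1 - Poly_Mapping.single ?m2 1"
      using edge(2) by (simp add: Var_def mult_single)
    ultimately show ?thesis by (intro that ext)
  next
    case vertex
    let ?m1 = "Poly_Mapping.single (ZV i) 1 + Poly_Mapping.single (VV i) (1::nat)"
    have "toric_degree m src tgt ?m1 = toric_degree m src tgt 0"
      by (auto simp: toric_degree_def net_inflow_def lookup_add lookup_single when_def)
    moreover have "s = Poly_Mapping.single ?m1 1 - Poly_Mapping.single 0 1"
      using vertex by (simp add: Var_def mult_single)
    ultimately show ?thesis by (rule that)
  qed
qed

lemma laurent_coeff_eq_sum_filter:
  "laurent_coeff m src tgt w p
    = (\<Sum>mon\<in>{mon \<in> Poly_Mapping.keys p. toric_degree m src tgt mon = w}. Poly_Mapping.lookup p mon)"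
  unfolding laurent_coeff_def sum.inter_filter[OF finite_keys] by (rule sum.cong) simp_all

lemma laurent_coeff_superset:
  assumes "finite S" and "Poly_Mapping.keys p \<subseteq> S"
  shows "laurent_coeff m src tgt w p
    = (\<Sum>mon\<in>S. of_bool (toric_degree m src tgt mon = w) * Poly_Mapping.lookup p mon)"
  unfolding laurent_coeff_def using assms by (intro sum.mono_neutral_left) (auto simp: in_keys_iff)

lemma laurent_coeff_add:
  "laurent_coeff m src tgt w (p + q) = laurent_coeff m src tgt w p + laurent_coeff m src tgt w q"
proof -
  let ?S = "Poly_Mapping.keys p \<union> Poly_Mapping.keys q"
  have "finite ?S" "Poly_Mapping.keys (p + q) \<subseteq> ?S"
    by (simp_all add: keys_add)
  then show ?thesis
    by (simp add: laurent_coeff_superset[of ?S] lookup_add distrib_left sum.distrib)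
qed

lemma laurent_coeff_diff:
  "laurent_coeff m src tgt w (p - q) = laurent_coeff m src tgt w p - laurent_coeff m src tgt w q"
proof -
  have "laurent_coeff m src tgt w (- q) = - laurent_coeff m src tgt w q"
    unfolding laurent_coeff_def by (simp add: sum_negf)
  then show ?thesis
    using laurent_coeff_add[of m src tgt w p "- q"] by simp
qed

lemma laurent_coeff_sum:
  "laurent_coeff m src tgt w (\<Sum>x\<in>F. g x) = (\<Sum>x\<in>F. laurent_coeff m src tgt w (g x))"
  by (induction F rule: infinite_finite_induct)
    (simp_all add: laurent_coeff_add, simp_all add: laurent_coeff_def)

lemma laurent_coeff_single:
  "laurent_coeff m src tgt w (Poly_Mapping.single mon c)
    = of_bool (toric_degree m src tgt mon = w) * c"
  unfolding laurent_coeff_def by simp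

lemma laurent_coeff_homogeneous_binomial_multiple:
  assumes "toric_degree m src tgt m1 = toric_degree m src tgt m2"
  shows "laurent_coeff m src tgt w (g * (Poly_Mapping.single m1 1 - Poly_Mapping.single m2 1)) = 0"
proof -
  have "g * (Poly_Mapping.single m1 1 - Poly_Mapping.single m2 1)
     = (\<Sum>mon\<in>Poly_Mapping.keys g. Poly_Mapping.single (mon + m1) (Poly_Mapping.lookup g mon)
                                  - Poly_Mapping.single (mon + m2) (Poly_Mapping.lookup g mon))"
    by (subst poly_mapping_sum_single[of g])
       (simp add: sum_distrib_right right_diff_distrib mult_single sum_subtractf)
  moreover have "toric_degree m src tgt (mon + m1) = toric_degree m src tgt (mon + m2)" for mon
    using assms by (simp add: toric_degree_add fun_eq_iff)
  ultimately show ?thesis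
    by (simp add: laurent_coeff_sum laurent_coeff_diff laurent_coeff_single)
qed

lemma laurent_coeff_toric_ideal:
  assumes "p \<in> toric_ideal n m src tgt"
  shows "laurent_coeff m src tgt w p = 0"
proof -
  obtain F r where F: "F \<subseteq> toric_gens n m src tgt" "p = (\<Sum>s\<in>F. r s * s)"
    using assms by (blast elim: ideal_genE)
  have "laurent_coeff m src tgt w (r s * s) = 0" if "s \<in> F" for s
    using that F(1)
    by (auto elim!: toric_gens_homogeneous intro: laurent_coeff_homogeneous_binomial_multiple)
  then show ?thesis
    using F(2) by (simp add: laurent_coeff_sum)
qed

lemma sum_single_group_by_degree:
  "(\<Sum>mon\<in>Poly_Mapping.keys p.
      Poly_Mapping.single (\<rho> (toric_degree m src tgt mon)) (Poly_Mapping.lookup p mon))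
   = (\<Sum>w\<in>toric_degree m src tgt ` Poly_Mapping.keys p.
      Poly_Mapping.single (\<rho> w) (laurent_coeff m src tgt w p))"
proof -
  let ?K = "Poly_Mapping.keys p" and ?deg = "toric_degree m src tgt"
  have "(\<Sum>mon\<in>?K. Poly_Mapping.single (\<rho> (?deg mon)) (Poly_Mapping.lookup p mon))
      = (\<Sum>w\<in>?deg ` ?K. \<Sum>mon\<in>{mon \<in> ?K. ?deg mon = w}.
          Poly_Mapping.single (\<rho> w) (Poly_Mapping.lookup p mon))"
    by (subst sum.image_gen[OF finite_keys, where g = ?deg]) (intro sum.cong refl, auto)
  also have "\<dots> = (\<Sum>w\<in>?deg ` ?K.
      Poly_Mapping.single (\<rho> w) (\<Sum>mon\<in>{mon \<in> ?K. ?deg mon = w}. Poly_Mapping.lookup p mon))"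
    by (simp add: single_sum)
  also have "\<dots> = (\<Sum>w\<in>?deg ` ?K. Poly_Mapping.single (\<rho> w) (laurent_coeff m src tgt w p))"
    by (simp only: laurent_coeff_eq_sum_filter)
  finally show ?thesis .
qed

section \<open>Congruences modulo the toric ideal\<close>

lemma simple_orientation_edge:
  assumes "simple_orientation n m src tgt" and "h \<in> {1..m}"
  shows "src h \<in> {1..n}" "tgt h \<in> {1..n}" "src h \<noteq> tgt h"
  using assms unfolding simple_orientation_def by blast+

lemma simple_orientation_inj:
  assumes "simple_orientation n m src tgt" and "h \<in> {1..m}" "h' \<in> {1..m}"
    and "{src h, tgt h} = {src h', tgt h'}"
  shows "h = h'"
  using assms unfolding simple_orientation_def by blast

definition toric_cong ::
  "nat \<Rightarrow> nat \<Rightarrow> (nat \<Rightarrow> nat) \<Rightarrow> (nat \<Rightarrow> nat) \<Rightarrow> 'k::comm_ring_1 mpoly \<Rightarrow> 'k mpoly \<Rightarrow> bool"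
  where "toric_cong n m src tgt x y \<longleftrightarrow> x - y \<in> toric_ideal n m src tgt"

lemma toric_cong_refl: "toric_cong n m src tgt x x"
  unfolding toric_cong_def by (simp add: zero_in_ideal_gen)

lemma toric_cong_sym: "toric_cong n m src tgt x y \<Longrightarrow> toric_cong n m src tgt y x"
  unfolding toric_cong_def using ideal_gen_diff[OF is_subring_UNIV zero_in_ideal_gen] by fastforce

lemma toric_cong_trans [trans]:
  "toric_cong n m src tgt x y \<Longrightarrow> toric_cong n m src tgt y z \<Longrightarrow> toric_cong n m src tgt x z"
  unfolding toric_cong_def using ideal_gen_add[OF is_subring_UNIV] by fastforce

lemma toric_cong_mult_left:
  "toric_cong n m src tgt x y \<Longrightarrow> toric_cong n m src tgt (c * x) (c * y)"
  unfolding toric_cong_def using ideal_gen_mult[OF is_subring_UNIV, of c "x - y"]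
  by (simp add: right_diff_distrib)

lemma toric_cong_mult_right:
  "toric_cong n m src tgt x y \<Longrightarrow> toric_cong n m src tgt (x * c) (y * c)"
  using toric_cong_mult_left by (metis mult.commute)

lemma toric_cong_ZV_VV: "i \<in> {1..n} \<Longrightarrow> toric_cong n m src tgt (Var (ZV i) * Var (VV i)) 1"
  unfolding toric_cong_def by (rule generator_in_ideal_gen) (auto simp: toric_gens_def)

lemma toric_cong_EV:
  "h \<in> {1..m} \<Longrightarrow> toric_cong n m src tgt (Var (EV h)) (Var (ZV (src h)) * Var (VV (tgt h)))"
  unfolding toric_cong_def by (rule generator_in_ideal_gen) (auto simp: toric_gens_def)

text \<open>Representatives of the Laurent monomials \<open>v\<^sup>w\<close>, with \<open>z\<^sub>i\<close> standing for \<open>v\<^sub>i\<^sup>-\<^sup>1\<close>.\<close>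

definition laurent_power :: "nat \<Rightarrow> int \<Rightarrow> 'k::comm_ring_1 mpoly" where
  "laurent_power i k = (if 0 \<le> k then Var (VV i) ^ nat k else Var (ZV i) ^ nat (- k))"

definition laurent_monomial :: "nat \<Rightarrow> (nat \<Rightarrow> int) \<Rightarrow> 'k::comm_ring_1 mpoly" where
  "laurent_monomial n w = (\<Prod>i\<in>{1..n}. laurent_power i (w i))"

lemma laurent_power_mult_VV:
  assumes i: "i \<in> {1..n}"
  shows "toric_cong n m src tgt (laurent_power i k * Var (VV i))
           (laurent_power i (k + 1) :: 'k::comm_ring_1 mpoly)"
proof (cases "0 \<le> k")
  case True
  then show ?thesis
    unfolding laurent_power_def by (simp add: nat_add_distrib mult.commute toric_cong_refl)
next
  case False
  define j where "j = nat (- k - 1)"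
  have "k = - int j - 1" using False unfolding j_def by simp
  then have "laurent_power i k = (Var (ZV i) ^ j * Var (ZV i) :: 'k mpoly)"
    and "laurent_power i (k + 1) = (Var (ZV i) ^ j :: 'k mpoly)"
    unfolding laurent_power_def by (simp_all add: nat_add_distrib)
  moreover have "toric_cong n m src tgt (Var (ZV i) ^ j * (Var (ZV i) * Var (VV i)))
      (Var (ZV i) ^ j * 1 :: 'k mpoly)"
    by (rule toric_cong_mult_left[OF toric_cong_ZV_VV[OF i]])
  ultimately show ?thesis by (simp add: mult.assoc)
qed

lemma laurent_power_mult_ZV:
  assumes i: "i \<in> {1..n}"
  shows "toric_cong n m src tgt (laurent_power i k * Var (ZV i))
           (laurent_power i (k - 1) :: 'k::comm_ring_1 mpoly)"
proof (cases "k \<le> 0")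
  case True
  then have "nat (- (k - 1)) = Suc (nat (- k))" by simp
  then show ?thesis
    using True unfolding laurent_power_def by (simp add: mult.commute toric_cong_refl)
next
  case False
  define j where "j = nat (k - 1)"
  have "k = int j + 1" using False unfolding j_def by simp
  then have "laurent_power i k = (Var (VV i) ^ j * Var (VV i) :: 'k mpoly)"
    and "laurent_power i (k - 1) = (Var (VV i) ^ j :: 'k mpoly)"
    unfolding laurent_power_def by (simp_all add: nat_add_distrib)
  moreover have "toric_cong n m src tgt (Var (VV i) ^ j * (Var (ZV i) * Var (VV i)))
      (Var (VV i) ^ j * 1 :: 'k mpoly)"
    by (rule toric_cong_mult_left[OF toric_cong_ZV_VV[OF i]])
  ultimately show ?thesis by (simp add: mult_ac)
qed

lemma laurent_monomial_update:
  assumes i: "i \<in> {1..n}"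
    and cong: "toric_cong n m src tgt (laurent_power i (w i) * x)
      (laurent_power i k :: 'k::comm_ring_1 mpoly)"
  shows "toric_cong n m src tgt (laurent_monomial n w * x) (laurent_monomial n (w(i := k)))"
proof -
  let ?rest = "(\<Prod>j\<in>{1..n} - {i}. laurent_power j (w j)) :: 'k mpoly"
  have "laurent_monomial n w * x = (laurent_power i (w i) * x) * ?rest"
    unfolding laurent_monomial_def using i by (simp add: prod.remove mult_ac)
  moreover have "laurent_monomial n (w(i := k)) = laurent_power i k * ?rest"
    unfolding laurent_monomial_def using i by (simp add: prod.remove)
  ultimately show ?thesis
    using toric_cong_mult_right[OF cong] by simp
qed

lemma laurent_monomial_mult_EV:
  assumes so: "simple_orientation n m src tgt" and h: "h \<in> {1..m}"
  shows "toric_cong n m src tgt (laurent_monomial n w * Var (EV h))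
           (laurent_monomial n (\<lambda>i. w i + incidence src tgt h i) :: 'k::comm_ring_1 mpoly)"
proof -
  note edge = simple_orientation_edge[OF so h]
  define w' where "w' = w(src h := w (src h) - 1)"
  have "toric_cong n m src tgt (laurent_monomial n w * Var (EV h))
          (laurent_monomial n w * Var (ZV (src h)) * Var (VV (tgt h)) :: 'k mpoly)"
    using toric_cong_mult_left[OF toric_cong_EV[OF h]] by (simp add: mult.assoc)
  also have "toric_cong n m src tgt \<dots> (laurent_monomial n w' * Var (VV (tgt h)))"
    unfolding w'_def
    by (intro toric_cong_mult_right laurent_monomial_update edge laurent_power_mult_ZV)
  also have "toric_cong n m src tgt \<dots> (laurent_monomial n (w'(tgt h := w' (tgt h) + 1)))"
    by (intro laurent_monomial_update edge laurent_power_mult_VV)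
  also have "w'(tgt h := w' (tgt h) + 1) = (\<lambda>i. w i + incidence src tgt h i)"
    using edge(3) unfolding w'_def incidence_def by (auto simp: fun_eq_iff)
  finally show ?thesis .
qed

lemma laurent_monomial_mult_EV_power:
  assumes so: "simple_orientation n m src tgt" and h: "h \<in> {1..m}"
  shows "toric_cong n m src tgt (laurent_monomial n w * Var (EV h) ^ k)
           (laurent_monomial n (\<lambda>i. w i + int k * incidence src tgt h i) :: 'k::comm_ring_1 mpoly)"
proof (induction k)
  case 0
  show ?case by (simp add: toric_cong_refl)
next
  case (Suc k)
  have "toric_cong n m src tgt (laurent_monomial n w * Var (EV h) ^ Suc k)
          (laurent_monomial n (\<lambda>i. w i + int k * incidence src tgt h i) * Var (EV h) :: 'k mpoly)"
    using toric_cong_mult_right[OF Suc.IH, where c = "Var (EV h)"] by (simp add: mult_ac)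
  also have "toric_cong n m src tgt \<dots>
      (laurent_monomial n (\<lambda>i. (w i + int k * incidence src tgt h i) + incidence src tgt h i))"
    by (rule laurent_monomial_mult_EV[OF so h])
  finally show ?case by (simp add: algebra_simps)
qed

lemma laurent_monomial_mult_prod_EV:
  assumes so: "simple_orientation n m src tgt" and S: "finite S" "S \<subseteq> {1..m}"
  shows "toric_cong n m src tgt (laurent_monomial n w * (\<Prod>h\<in>S. Var (EV h) ^ A h))
           (laurent_monomial n (\<lambda>i. w i + (\<Sum>h\<in>S. int (A h) * incidence src tgt h i))
             :: 'k::comm_ring_1 mpoly)"
  using S
proof (induction S arbitrary: w rule: finite_induct)
  case empty
  show ?case by (simp add: toric_cong_refl)
next
  case (insert h S)
  let ?w = "\<lambda>i. w i + int (A h) * incidence src tgt h i"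
  have "toric_cong n m src tgt (laurent_monomial n w * (\<Prod>h\<in>insert h S. Var (EV h) ^ A h))
          (laurent_monomial n ?w * (\<Prod>h\<in>S. Var (EV h) ^ A h) :: 'k mpoly)"
    using toric_cong_mult_right[OF laurent_monomial_mult_EV_power[OF so, of h w "A h"]] insert
    by (simp add: mult.assoc)
  also have "toric_cong n m src tgt \<dots>
      (laurent_monomial n (\<lambda>i. ?w i + (\<Sum>h\<in>S. int (A h) * incidence src tgt h i)))"
    using insert by blast
  finally show ?case
    using insert.hyps by (simp add: algebra_simps)
qed

lemma edge_monomial_toric_cong:
  assumes "simple_orientation n m src tgt"
  shows "toric_cong n m src tgt (edge_monomial m A) (laurent_monomial n (net_inflow m src tgt A))"
  using laurent_monomial_mult_prod_EV[OF assms, of "{1..m}" "\<lambda>_. 0" A]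
  by (simp add: edge_monomial_def net_inflow_def laurent_monomial_def laurent_power_def)

lemma equal_net_inflow_imp_toric_ideal:
  assumes "simple_orientation n m src tgt" and "net_inflow m src tgt A = net_inflow m src tgt B"
  shows "edge_monomial m A - edge_monomial m B \<in> toric_ideal n m src tgt"
proof -
  have "toric_cong n m src tgt (edge_monomial m A) (laurent_monomial n (net_inflow m src tgt B))"
    using edge_monomial_toric_cong[OF assms(1), of A] assms(2) by simp
  also have "toric_cong n m src tgt \<dots> (edge_monomial m B)"
    by (rule toric_cong_sym[OF edge_monomial_toric_cong[OF assms(1)]])
  finally show ?thesis unfolding toric_cong_def .
qed

section \<open>Cycle binomials\<close>

lemma sum_rotate_mod: "(\<Sum>k<q. f ((k + 1) mod q :: nat)) = (\<Sum>k<q. f k :: 'a::comm_monoid_add)"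
proof (cases q)
  case (Suc p)
  have "(\<Sum>k<Suc p. f ((k + 1) mod Suc p)) = (\<Sum>k<p. f (Suc k)) + f 0"
    by (simp add: atLeast0LessThan[symmetric])
  also have "\<dots> = (\<Sum>k<Suc p. f k)"
    unfolding sum.lessThan_Suc_shift by (rule add.commute)
  finally show ?thesis using Suc by simp
qed simp

lemma succ_mod_not_symmetric:
  fixes k k' q :: nat
  assumes "k < q" "3 \<le> q" "k = (k' + 1) mod q" "k' = (k + 1) mod q"
  shows False
proof -
  have "k = (k + 1 + 1) mod q"
    using assms(3) unfolding assms(4) mod_add_left_eq .
  then have "k mod q = (k + 2) mod q"
    using assms(1) by simp
  then have "q dvd 2"
    using mod_eq_dvd_iff_nat[of k "k + 2" q] by simp
  then show False
    using assms(2) by (auto dest: dvd_imp_le)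
qed

definition forward_steps :: "(nat \<Rightarrow> nat) \<Rightarrow> (nat \<Rightarrow> nat) \<Rightarrow> nat list \<Rightarrow> nat list \<Rightarrow> nat set"
  where "forward_steps src tgt vs es =
     {k. k < length vs \<and> src (es ! k) = vs ! k \<and> tgt (es ! k) = vs ! ((k + 1) mod length vs)}"

definition backward_steps :: "(nat \<Rightarrow> nat) \<Rightarrow> (nat \<Rightarrow> nat) \<Rightarrow> nat list \<Rightarrow> nat list \<Rightarrow> nat set"
  where "backward_steps src tgt vs es = {k. k < length vs} - forward_steps src tgt vs es"

definition forward_edges :: "(nat \<Rightarrow> nat) \<Rightarrow> (nat \<Rightarrow> nat) \<Rightarrow> nat list \<Rightarrow> nat list \<Rightarrow> nat set"
  where "forward_edges src tgt vs es = (\<lambda>k. es ! k) ` forward_steps src tgt vs es"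

definition backward_edges :: "(nat \<Rightarrow> nat) \<Rightarrow> (nat \<Rightarrow> nat) \<Rightarrow> nat list \<Rightarrow> nat list \<Rightarrow> nat set"
  where "backward_edges src tgt vs es = (\<lambda>k. es ! k) ` backward_steps src tgt vs es"

lemma fC_eq_steps:
  "fC src tgt vs es = (\<Prod>k\<in>forward_steps src tgt vs es. Var (EV (es ! k)))
                      - (\<Prod>k\<in>backward_steps src tgt vs es. Var (EV (es ! k)))"
  unfolding fC_def forward_steps_def backward_steps_def Let_def ..

lemma forward_backward_steps_partition:
  "forward_steps src tgt vs es \<union> backward_steps src tgt vs es = {..<length vs}"
  "forward_steps src tgt vs es \<inter> backward_steps src tgt vs es = {}"
  unfolding forward_steps_def backward_steps_def by auto

lemma is_cycle_consecutive_neq: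
  assumes "is_cycle n m src tgt vs es" and "k < length vs"
  shows "vs ! k \<noteq> vs ! ((k + 1) mod length vs)"
proof -
  have q: "3 \<le> length vs" and dvs: "distinct vs"
    using assms(1) unfolding is_cycle_def by blast+
  have "(k + 1) mod length vs \<noteq> k" "(k + 1) mod length vs < length vs"
    using assms(2) q by (auto simp: mod_Suc)
  then show ?thesis
    using nth_eq_iff_index_eq[OF dvs assms(2)] by metis
qed

lemma is_cycle_backward_step:
  assumes "is_cycle n m src tgt vs es" and "k \<in> backward_steps src tgt vs es"
  shows "src (es ! k) = vs ! ((k + 1) mod length vs) \<and> tgt (es ! k) = vs ! k"
proof -
  have k: "k < length vs" "k \<notin> forward_steps src tgt vs es"
    using assms(2) unfolding backward_steps_def by auto
  then have "{src (es ! k), tgt (es ! k)} = {vs ! k, vs ! ((k + 1) mod length vs)}"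
    using assms(1) unfolding is_cycle_def by blast
  then show ?thesis
    using k is_cycle_consecutive_neq[OF assms(1) k(1)]
    unfolding forward_steps_def by (auto simp: doubleton_eq_iff)
qed

lemma is_cycle_distinct_edges:
  assumes cy: "is_cycle n m src tgt vs es"
  shows "distinct es"
proof -
  let ?q = "length vs" and ?next = "\<lambda>k. (k + 1) mod length vs"
  have q: "length es = ?q" "3 \<le> ?q" and dvs: "distinct vs"
    and edge: "\<And>k. k < ?q \<Longrightarrow>
      es ! k \<in> {1..m} \<and> {src (es ! k), tgt (es ! k)} = {vs ! k, vs ! ?next k}"
    using cy unfolding is_cycle_def by blast+
  have "es ! k \<noteq> es ! k'" if k: "k < ?q" "k' < ?q" "k \<noteq> k'" for k k'
  proof
    assume "es ! k = es ! k'"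
    then have "{vs ! k, vs ! ?next k} = {vs ! k', vs ! ?next k'}"
      using edge[OF k(1)] edge[OF k(2)] by simp
    moreover have "vs ! k \<noteq> vs ! k'"
      using k dvs by (simp add: nth_eq_iff_index_eq)
    ultimately have "vs ! k = vs ! ?next k'" "vs ! ?next k = vs ! k'"
      by (auto simp: doubleton_eq_iff)
    moreover have "?next k < ?q" "?next k' < ?q"
      using q(2) by (auto intro!: mod_less_divisor)
    ultimately have "k = ?next k'" "k' = ?next k"
      using k dvs by (simp_all add: nth_eq_iff_index_eq)
    then show False
      using succ_mod_not_symmetric k(1) q(2) by blast
  qed
  then show ?thesis
    using q(1) by (auto simp: distinct_conv_nth)
qed

lemma is_cycle_edges_subset:
  assumes "is_cycle n m src tgt vs es"
  shows "forward_edges src tgt vs es \<subseteq> {1..m}" "backward_edges src tgt vs es \<subseteq> {1..m}"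
proof -
  have "es ! k \<in> {1..m}" if "k < length vs" for k
    using assms that unfolding is_cycle_def by blast
  then show "forward_edges src tgt vs es \<subseteq> {1..m}" "backward_edges src tgt vs es \<subseteq> {1..m}"
    unfolding forward_edges_def backward_edges_def forward_steps_def backward_steps_def by auto
qed

lemma is_cycle_inj_on_steps:
  assumes cy: "is_cycle n m src tgt vs es"
  shows "inj_on (\<lambda>k. es ! k) (forward_steps src tgt vs es)"
    and "inj_on (\<lambda>k. es ! k) (backward_steps src tgt vs es)"
proof -
  have "length es = length vs" using cy unfolding is_cycle_def by blast
  then have "forward_steps src tgt vs es \<subseteq> {..<length es}"
    and "backward_steps src tgt vs es \<subseteq> {..<length es}"
    using forward_backward_steps_partition(1)[of src tgt vs es] by auto
  then show "inj_on (\<lambda>k. es ! k) (forward_steps src tgt vs es)"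
    and "inj_on (\<lambda>k. es ! k) (backward_steps src tgt vs es)"
    using inj_on_nth[OF is_cycle_distinct_edges[OF cy]] by blast+
qed

lemma fC_eq_edge_monomial_diff:
  assumes cy: "is_cycle n m src tgt vs es"
  shows "(fC src tgt vs es :: 'k::comm_ring_1 mpoly)
           = edge_monomial m (\<lambda>h. of_bool (h \<in> forward_edges src tgt vs es))
             - edge_monomial m (\<lambda>h. of_bool (h \<in> backward_edges src tgt vs es))"
proof -
  have "(\<Prod>h\<in>forward_edges src tgt vs es. Var (EV h))
      = (\<Prod>k\<in>forward_steps src tgt vs es. Var (EV (es ! k)) :: 'k mpoly)"
    and "(\<Prod>h\<in>backward_edges src tgt vs es. Var (EV h))
      = (\<Prod>k\<in>backward_steps src tgt vs es. Var (EV (es ! k)) :: 'k mpoly)"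
    unfolding forward_edges_def backward_edges_def
    using prod.reindex[OF is_cycle_inj_on_steps(1)[OF cy], of "\<lambda>h. Var (EV h)"]
      prod.reindex[OF is_cycle_inj_on_steps(2)[OF cy], of "\<lambda>h. Var (EV h)"]
    by (simp_all add: comp_def)
  then show ?thesis
    unfolding fC_eq_steps edge_monomial_indicator[OF is_cycle_edges_subset(1)[OF cy]]
      edge_monomial_indicator[OF is_cycle_edges_subset(2)[OF cy]] by simp
qed

lemma is_cycle_net_inflow_eq:
  assumes cy: "is_cycle n m src tgt vs es"
  shows "net_inflow m src tgt (\<lambda>h. of_bool (h \<in> forward_edges src tgt vs es))
       = net_inflow m src tgt (\<lambda>h. of_bool (h \<in> backward_edges src tgt vs es))"
proof
  fix i
  let ?q = "length vs"
    and ?F = "forward_steps src tgt vs es" and ?B = "backward_steps src tgt vs es"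
  define g where "g k = of_bool (vs ! ((k + 1) mod ?q) = i) - (of_bool (vs ! k = i) :: int)" for k
  have "incidence src tgt (es ! k) i = g k" if "k \<in> ?F" for k
    using that unfolding forward_steps_def incidence_def g_def by auto
  then have F: "net_inflow m src tgt (\<lambda>h. of_bool (h \<in> forward_edges src tgt vs es)) i = sum g ?F"
    using net_inflow_indicator[OF is_cycle_edges_subset(1)[OF cy]]
    by (simp add: forward_edges_def sum.reindex[OF is_cycle_inj_on_steps(1)[OF cy]])
  have "incidence src tgt (es ! k) i = - g k" if "k \<in> ?B" for k
    using is_cycle_backward_step[OF cy that] unfolding incidence_def g_def by auto
  then have B: "net_inflow m src tgt (\<lambda>h. of_bool (h \<in> backward_edges src tgt vs es)) i
      = - sum g ?B"
    using net_inflow_indicator[OF is_cycle_edges_subset(2)[OF cy]]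
    by (simp add: backward_edges_def sum.reindex[OF is_cycle_inj_on_steps(2)[OF cy]] sum_negf)
  have "sum g ?F + sum g ?B = (\<Sum>k<?q. g k)"
    using forward_backward_steps_partition[of src tgt vs es] sum.union_disjoint[of ?F ?B g]
    by (metis finite_Un finite_lessThan)
  also have "\<dots> = 0"
    unfolding g_def sum_subtractf sum_rotate_mod[where f = "\<lambda>k. of_bool (vs ! k = i) :: int"]
    by simp
  finally show "net_inflow m src tgt (\<lambda>h. of_bool (h \<in> forward_edges src tgt vs es)) i
       = net_inflow m src tgt (\<lambda>h. of_bool (h \<in> backward_edges src tgt vs es)) i"
    unfolding F B by simp
qed

section \<open>Cycles in balanced digraphs\<close>

lemma infinite_walk_exists:
  assumes "R u0 w0" and "\<And>x u. R x u \<Longrightarrow> \<exists>w. R u w"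
  shows "\<exists>x. \<forall>j. R (x j) (x (Suc j))"
proof -
  have "\<exists>x. \<forall>j. (\<exists>y. R y (x j)) \<and> R (x j) (x (Suc j))"
    using assms by (intro dependent_nat_choice[where P = "\<lambda>_ u. \<exists>y. R y u"]) blast+
  then show ?thesis by blast
qed

lemma closed_walk_of_repetition:
  assumes walk: "\<And>j. R (x j) (x (Suc j))" and ij: "i < j" "x i = x j"
  defines "vs \<equiv> map x [i..<j]"
  shows "\<forall>k<length vs. R (vs ! k) (vs ! ((k + 1) mod length vs))"
proof (intro allI impI)
  fix k assume "k < length vs"
  then have k: "k < j - i" unfolding vs_def by simp
  have "vs ! ((k + 1) mod (j - i)) = x (i + k + 1)"
  proof (cases "k + 1 < j - i")
    case True
    then show ?thesis unfolding vs_def by simp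
  next
    case False
    then have "k + 1 = j - i" using k by simp
    then have "(k + 1) mod (j - i) = 0" "i + k + 1 = j" by simp_all
    then show ?thesis using ij unfolding vs_def by simp
  qed
  then show "R (vs ! k) (vs ! ((k + 1) mod length vs))"
    using walk[of "i + k"] k unfolding vs_def by simp
qed

lemma simple_cycle_of_walk:
  assumes "finite V" and inV: "\<And>j. x j \<in> V" and walk: "\<And>j. R (x j) (x (Suc j))"
  shows "\<exists>vs. vs \<noteq> [] \<and> distinct vs \<and> set vs \<subseteq> V
           \<and> (\<forall>k<length vs. R (vs ! k) (vs ! ((k + 1) mod length vs)))"
proof -
  let ?repeats = "\<lambda>j. \<exists>i<j. x i = x j"
  have "card (x ` {..card V}) \<le> card V"
    using assms(1) inV by (intro card_mono) auto
  then have "\<not> inj_on x {..card V}"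
    by (intro pigeonhole) simp
  then have "\<exists>j. ?repeats j"
    unfolding inj_on_def by (metis linorder_neqE_nat)
  define j where "j = (LEAST j. ?repeats j)"
  obtain i where ij: "i < j" "x i = x j"
    using LeastI_ex[OF \<open>\<exists>j. ?repeats j\<close>] unfolding j_def by blast
  have "inj_on x {..<j}"
  proof (rule linorder_inj_onI')
    fix a b assume "b \<in> {..<j}" "a < b"
    then show "x a \<noteq> x b"
      using not_less_Least[of b ?repeats] unfolding j_def by auto
  qed
  then have "distinct (map x [i..<j])"
    by (simp add: distinct_map inj_on_subset[of x "{..<j}"] subset_eq)
  moreover have "map x [i..<j] \<noteq> []" "set (map x [i..<j]) \<subseteq> V"
    using ij inV by auto
  ultimately show ?thesis
    using closed_walk_of_repetition[of R x, OF walk ij] by blast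
qed

text \<open>An arc from \<open>u\<close> to \<open>w\<close>, carried by the edge \<open>h\<close>, of the digraph described in the header.\<close>

definition surplus_arc :: "nat \<Rightarrow> (nat \<Rightarrow> nat) \<Rightarrow> (nat \<Rightarrow> nat) \<Rightarrow> (nat \<Rightarrow> nat) \<Rightarrow> (nat \<Rightarrow> nat)
    \<Rightarrow> nat \<Rightarrow> nat \<Rightarrow> nat \<Rightarrow> bool"
  where "surplus_arc m src tgt A B h u w \<longleftrightarrow> h \<in> {1..m} \<and>
     (B h < A h \<and> src h = u \<and> tgt h = w \<or> A h < B h \<and> src h = w \<and> tgt h = u)"

definition follows_surplus_arcs ::
  "nat \<Rightarrow> (nat \<Rightarrow> nat) \<Rightarrow> (nat \<Rightarrow> nat) \<Rightarrow> (nat \<Rightarrow> nat) \<Rightarrow> (nat \<Rightarrow> nat) \<Rightarrow> nat list \<Rightarrow> nat list \<Rightarrow> bool"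
  where "follows_surplus_arcs m src tgt A B vs es \<longleftrightarrow>
    (\<forall>k<length vs. surplus_arc m src tgt A B (es ! k) (vs ! k) (vs ! ((k + 1) mod length vs)))"

lemma surplus_arc_endpoints:
  "surplus_arc m src tgt A B h u w \<Longrightarrow> {src h, tgt h} = {u, w}"
  unfolding surplus_arc_def by auto

lemma surplus_arc_vertices:
  assumes "simple_orientation n m src tgt" and "surplus_arc m src tgt A B h u w"
  shows "u \<in> {1..n}" "w \<in> {1..n}"
proof -
  have "h \<in> {1..m}"
    using assms(2) unfolding surplus_arc_def by blast
  then have "{src h, tgt h} \<subseteq> {1..n}"
    using simple_orientation_edge(1,2)[OF assms(1)] by blast
  then show "u \<in> {1..n}" "w \<in> {1..n}"
    unfolding surplus_arc_endpoints[OF assms(2)] by simp_all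
qed

lemma surplus_arc_not_loop:
  assumes "simple_orientation n m src tgt"
  shows "\<not> surplus_arc m src tgt A B h u u"
proof
  assume "surplus_arc m src tgt A B h u u"
  then have "h \<in> {1..m}" and "src h = tgt h"
    unfolding surplus_arc_def by auto
  then show False
    using simple_orientation_edge(3)[OF assms] by blast
qed

lemma surplus_arc_asym:
  assumes "simple_orientation n m src tgt"
    and "surplus_arc m src tgt A B h u w" "surplus_arc m src tgt A B h' w u"
  shows "u = w"
proof -
  have "h = h'"
    using assms surplus_arc_endpoints[OF assms(2)] surplus_arc_endpoints[OF assms(3)]
    by (intro simple_orientation_inj[OF assms(1)]) (auto simp: surplus_arc_def)
  then show ?thesis
    using assms(2,3) unfolding surplus_arc_def by auto
qed

lemma surplus_arc_incidence_pos:
  assumes "simple_orientation n m src tgt" and "surplus_arc m src tgt A B h x u"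
  shows "0 < (int (A h) - int (B h)) * incidence src tgt h u"
proof -
  have "src h \<noteq> tgt h"
    using assms simple_orientation_edge(3) unfolding surplus_arc_def by blast
  then show ?thesis
    using assms(2) unfolding surplus_arc_def incidence_def by auto
qed

lemma no_surplus_out_arc_incidence_nonneg:
  assumes "simple_orientation n m src tgt" and "h \<in> {1..m}"
    and "\<forall>w. \<not> surplus_arc m src tgt A B h u w"
  shows "0 \<le> (int (A h) - int (B h)) * incidence src tgt h u"
proof -
  have "\<not> A h < B h" if "tgt h = u"
    using assms(2,3) that unfolding surplus_arc_def by blast
  moreover have "\<not> B h < A h" if "src h = u"
    using assms(2,3) that unfolding surplus_arc_def by blast
  ultimately show ?thesis
    using simple_orientation_edge(3)[OF assms(1,2)] unfolding incidence_def by auto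
qed

lemma surplus_out_arc_exists:
  assumes so: "simple_orientation n m src tgt"
    and eq: "net_inflow m src tgt A = net_inflow m src tgt B"
    and "surplus_arc m src tgt A B h x u"
  shows "\<exists>h' w. surplus_arc m src tgt A B h' u w"
proof (rule ccontr)
  assume "\<not> (\<exists>h' w. surplus_arc m src tgt A B h' u w)"
  then have "0 < (\<Sum>h'\<in>{1..m}. (int (A h') - int (B h')) * incidence src tgt h' u)"
    using assms(3) surplus_arc_incidence_pos[OF so assms(3)]
      no_surplus_out_arc_incidence_nonneg[OF so]
    by (intro sum_pos2[of _ h]) (auto simp: surplus_arc_def)
  moreover have "net_inflow m src tgt A u - net_inflow m src tgt B u = 0"
    using eq by simp
  ultimately show False
    unfolding net_inflow_def by (simp add: sum_subtractf left_diff_distrib)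
qed

lemma surplus_cycle_exists:
  assumes so: "simple_orientation n m src tgt"
    and eq: "net_inflow m src tgt A = net_inflow m src tgt B"
    and h0: "h0 \<in> {1..m}" "A h0 \<noteq> B h0"
  obtains vs es where "is_cycle n m src tgt vs es" and "follows_surplus_arcs m src tgt A B vs es"
proof -
  let ?R = "\<lambda>u w. \<exists>h. surplus_arc m src tgt A B h u w"
  have "?R (src h0) (tgt h0) \<or> ?R (tgt h0) (src h0)"
    using h0 unfolding surplus_arc_def by (metis nat_neq_iff)
  then obtain u0 w0 where "?R u0 w0" by blast
  then obtain x where walk: "\<And>j. ?R (x j) (x (Suc j))"
    using infinite_walk_exists[of ?R] surplus_out_arc_exists[OF so eq] by metis
  have "x j \<in> {1..n}" for j
    using walk[of j] surplus_arc_vertices(1)[OF so] by blast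
  then obtain vs where vs: "vs \<noteq> []" "distinct vs" "set vs \<subseteq> {1..n}"
    and arcs: "\<forall>k<length vs. ?R (vs ! k) (vs ! ((k + 1) mod length vs))"
    using simple_cycle_of_walk[of "{1..n}" x ?R] walk by blast
  then obtain e where e:
    "\<forall>k<length vs. surplus_arc m src tgt A B (e k) (vs ! k) (vs ! ((k + 1) mod length vs))"
    by metis
  have "length vs \<noteq> 1"
    using e surplus_arc_not_loop[OF so] by force
  moreover have "length vs \<noteq> 2"
  proof
    assume "length vs = 2"
    then have "surplus_arc m src tgt A B (e 0) (vs ! 0) (vs ! 1)"
      and "surplus_arc m src tgt A B (e 1) (vs ! 1) (vs ! 0)"
      using spec[OF e, of 0] spec[OF e, of 1] by simp_all
    then have "vs ! 0 = vs ! 1"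
      by (rule surplus_arc_asym[OF so])
    then show False
      using vs(2) \<open>length vs = 2\<close> by (simp add: nth_eq_iff_index_eq)
  qed
  moreover have "length vs \<noteq> 0"
    using vs(1) by simp
  ultimately have "3 \<le> length vs"
    by presburger
  moreover have "e k \<in> {1..m} \<and> {src (e k), tgt (e k)} = {vs ! k, vs ! ((k + 1) mod length vs)}"
    if "k < length vs" for k
    using e that surplus_arc_endpoints unfolding surplus_arc_def by blast
  ultimately have "is_cycle n m src tgt vs (map e [0..<length vs])"
    using vs unfolding is_cycle_def by simp
  then show ?thesis
    using that e unfolding follows_surplus_arcs_def by simp
qed

lemma surplus_cycle_edges:
  assumes cy: "is_cycle n m src tgt vs es"
    and arcs: "follows_surplus_arcs m src tgt A B vs es"
  shows "h \<in> forward_edges src tgt vs es \<Longrightarrow> B h < A h"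
    and "h \<in> backward_edges src tgt vs es \<Longrightarrow> A h < B h"
proof -
  assume "h \<in> forward_edges src tgt vs es"
  then obtain k where k: "k \<in> forward_steps src tgt vs es" "h = es ! k"
    unfolding forward_edges_def by blast
  then have "k < length vs" unfolding forward_steps_def by blast
  then show "B h < A h"
    using k arcs is_cycle_consecutive_neq[OF cy]
    unfolding follows_surplus_arcs_def forward_steps_def surplus_arc_def by auto
next
  assume "h \<in> backward_edges src tgt vs es"
  then obtain k where k: "k \<in> backward_steps src tgt vs es" "h = es ! k"
    unfolding backward_edges_def by blast
  then have "k < length vs" unfolding backward_steps_def by blast
  then show "A h < B h"
    using k arcs is_cycle_consecutive_neq[OF cy] is_cycle_backward_step[OF cy k(1)]
    unfolding follows_surplus_arcs_def surplus_arc_def by auto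
qed

lemma surplus_cycle_subtract:
  assumes cy: "is_cycle n m src tgt vs es"
    and arcs: "follows_surplus_arcs m src tgt A B vs es"
    and eq: "net_inflow m src tgt A = net_inflow m src tgt B"
  defines "F \<equiv> \<lambda>h. of_bool (h \<in> forward_edges src tgt vs es)"
    and "R \<equiv> \<lambda>h. of_bool (h \<in> backward_edges src tgt vs es)"
  shows "A = (\<lambda>h. F h + (A h - F h))" "B = (\<lambda>h. R h + (B h - R h))"
    and "net_inflow m src tgt (\<lambda>h. A h - F h) = net_inflow m src tgt (\<lambda>h. B h - R h)"
    and "(\<Sum>h\<in>{1..m}. (A h - F h) + (B h - R h)) < (\<Sum>h\<in>{1..m}. A h + B h)"
proof -
  note lt = surplus_cycle_edges[OF cy arcs]
  show A: "A = (\<lambda>h. F h + (A h - F h))" and B: "B = (\<lambda>h. R h + (B h - R h))"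
    unfolding F_def R_def by (auto simp: fun_eq_iff dest: lt)
  show "net_inflow m src tgt (\<lambda>h. A h - F h) = net_inflow m src tgt (\<lambda>h. B h - R h)"
  proof
    fix i
    have "net_inflow m src tgt A i
        = net_inflow m src tgt F i + net_inflow m src tgt (\<lambda>h. A h - F h) i"
      by (subst A) (rule net_inflow_add)
    moreover have "net_inflow m src tgt B i
        = net_inflow m src tgt R i + net_inflow m src tgt (\<lambda>h. B h - R h) i"
      by (subst B) (rule net_inflow_add)
    ultimately show
      "net_inflow m src tgt (\<lambda>h. A h - F h) i = net_inflow m src tgt (\<lambda>h. B h - R h) i"
      using eq is_cycle_net_inflow_eq[OF cy] unfolding F_def R_def by simp
  qed
  have "es ! 0 \<in> forward_edges src tgt vs es \<union> backward_edges src tgt vs es"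
    using cy forward_backward_steps_partition(1)[of src tgt vs es]
    unfolding forward_edges_def backward_edges_def is_cycle_def by auto
  then have "(A (es ! 0) - F (es ! 0)) + (B (es ! 0) - R (es ! 0)) < A (es ! 0) + B (es ! 0)"
    using lt[of "es ! 0"] unfolding F_def R_def by auto
  moreover have "0 < length vs" and "\<forall>k<length vs. es ! k \<in> {1..m}"
    using cy unfolding is_cycle_def by auto
  then have "es ! 0 \<in> {1..m}" by blast
  ultimately show "(\<Sum>h\<in>{1..m}. (A h - F h) + (B h - R h)) < (\<Sum>h\<in>{1..m}. A h + B h)"
    by (intro sum_strict_mono_ex1) auto
qed

section \<open>The ideal generated by the cycle binomials\<close>

abbreviation cycle_ideal :: "nat \<Rightarrow> nat \<Rightarrow> (nat \<Rightarrow> nat) \<Rightarrow> (nat \<Rightarrow> nat) \<Rightarrow> 'k::comm_ring_1 mpoly set"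
  where "cycle_ideal n m src tgt \<equiv>
    ideal_gen (Ering m) {fC src tgt vs es | vs es. is_cycle n m src tgt vs es}"

lemma fC_in_cycle_ideal: "is_cycle n m src tgt vs es \<Longrightarrow> fC src tgt vs es \<in> cycle_ideal n m src tgt"
  using is_subring_Ering unfolding is_subring_def by (blast intro: generator_in_ideal_gen)

lemma equal_net_inflow_imp_cycle_ideal:
  assumes so: "simple_orientation n m src tgt"
  shows "net_inflow m src tgt A = net_inflow m src tgt B \<Longrightarrow>
    edge_monomial m A - edge_monomial m B \<in> (cycle_ideal n m src tgt :: 'k::comm_ring_1 mpoly set)"
proof (induction "\<Sum>h\<in>{1..m}. A h + B h" arbitrary: A B rule: less_induct)
  case less
  show ?case
  proof (cases "\<forall>h\<in>{1..m}. A h = B h")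
    case True
    then have "edge_monomial m A = (edge_monomial m B :: 'k mpoly)"
      unfolding edge_monomial_def by (intro prod.cong) auto
    then show ?thesis by (simp add: zero_in_ideal_gen)
  next
    case False
    then obtain h0 where "h0 \<in> {1..m}" "A h0 \<noteq> B h0" by blast
    then obtain vs es where cy: "is_cycle n m src tgt vs es"
      and arcs: "follows_surplus_arcs m src tgt A B vs es"
      using surplus_cycle_exists[OF so less.prems] by blast
    define F :: "nat \<Rightarrow> nat" where "F h = of_bool (h \<in> forward_edges src tgt vs es)" for h
    define R :: "nat \<Rightarrow> nat" where "R h = of_bool (h \<in> backward_edges src tgt vs es)" for h
    note subtract = surplus_cycle_subtract[OF cy arcs less.prems, folded F_def R_def]
    have "edge_monomial m A = (edge_monomial m F * edge_monomial m (\<lambda>h. A h - F h) :: 'k mpoly)"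
      and "edge_monomial m B = (edge_monomial m R * edge_monomial m (\<lambda>h. B h - R h) :: 'k mpoly)"
      using arg_cong[OF subtract(1), of "edge_monomial m"]
        arg_cong[OF subtract(2), of "edge_monomial m"]
      by (simp_all only: edge_monomial_add)
    then have decomposition: "edge_monomial m A - edge_monomial m B
        = edge_monomial m (\<lambda>h. A h - F h) * fC src tgt vs es
          + edge_monomial m R
            * (edge_monomial m (\<lambda>h. A h - F h) - edge_monomial m (\<lambda>h. B h - R h) :: 'k mpoly)"
      unfolding fC_eq_edge_monomial_diff[OF cy, folded F_def R_def] by (simp add: algebra_simps)
    have "edge_monomial m (\<lambda>h. A h - F h) * fC src tgt vs es
        \<in> (cycle_ideal n m src tgt :: 'k mpoly set)"
      by (rule ideal_gen_mult[OF is_subring_Ering edge_monomial_in_Ering fC_in_cycle_ideal[OF cy]])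
    moreover have "edge_monomial m R
        * (edge_monomial m (\<lambda>h. A h - F h) - edge_monomial m (\<lambda>h. B h - R h))
        \<in> (cycle_ideal n m src tgt :: 'k mpoly set)"
      using less.hyps[OF subtract(4,3)]
      by (rule ideal_gen_mult[OF is_subring_Ering edge_monomial_in_Ering])
    ultimately show ?thesis
      unfolding decomposition by (rule ideal_gen_add[OF is_subring_Ering])
  qed
qed

lemma homogeneous_binomial_in_cycle_ideal:
  assumes so: "simple_orientation n m src tgt"
    and keys: "Poly_Mapping.keys mon \<subseteq> EV ` {1..m}" "Poly_Mapping.keys mon' \<subseteq> EV ` {1..m}"
    and deg: "toric_degree m src tgt mon = toric_degree m src tgt mon'"
  shows "Poly_Mapping.single mon 1 - Poly_Mapping.single mon' 1
           \<in> (cycle_ideal n m src tgt :: 'k::comm_ring_1 mpoly set)"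
  using equal_net_inflow_imp_cycle_ideal[OF so] deg
  unfolding single_eq_edge_monomial[OF keys(1)] single_eq_edge_monomial[OF keys(2)]
    toric_degree_eq_net_inflow[OF keys(1)] toric_degree_eq_net_inflow[OF keys(2)]
  by blast

lemma fC_in_IE:
  assumes "simple_orientation n m src tgt" and "is_cycle n m src tgt vs es"
  shows "fC src tgt vs es \<in> IE n m src tgt"
  unfolding IE_def fC_eq_edge_monomial_diff[OF assms(2)]
  using equal_net_inflow_imp_toric_ideal[OF assms(1) is_cycle_net_inflow_eq[OF assms(2)]]
  by (simp add: Ering_diff edge_monomial_in_Ering)

lemma cycle_ideal_subset_IE:
  assumes "simple_orientation n m src tgt"
  shows "cycle_ideal n m src tgt \<subseteq> IE n m src tgt"
proof
  fix p assume "p \<in> cycle_ideal n m src tgt"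
  then obtain F r where F: "F \<subseteq> {fC src tgt vs es | vs es. is_cycle n m src tgt vs es}"
    "\<And>s. s \<in> F \<Longrightarrow> r s \<in> Ering m" "p = (\<Sum>s\<in>F. r s * s)"
    by (blast elim: ideal_genE)
  have "s \<in> IE n m src tgt" if "s \<in> F" for s
    using that F(1) fC_in_IE[OF assms] by blast
  then have "r s * s \<in> toric_ideal n m src tgt" "r s * s \<in> Ering m" if "s \<in> F" for s
    using that F(2) unfolding IE_def by (auto intro: ideal_gen_mult[OF is_subring_UNIV] Ering_mult)
  then show "p \<in> IE n m src tgt"
    unfolding IE_def F(3) by (auto intro: ideal_gen_sum[OF is_subring_UNIV] Ering_sum)
qed

lemma IE_subset_cycle_ideal:
  assumes so: "simple_orientation n m src tgt"
  shows "IE n m src tgt \<subseteq> (cycle_ideal n m src tgt :: 'k::comm_ring_1 mpoly set)"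
proof
  fix p :: "'k mpoly" assume "p \<in> IE n m src tgt"
  then have Ering: "p \<in> Ering m" and toric: "p \<in> toric_ideal n m src tgt"
    unfolding IE_def by auto
  let ?K = "Poly_Mapping.keys p" and ?c = "Poly_Mapping.lookup p"
    and ?deg = "toric_degree m src tgt"
  \<comment> \<open>Subtracting from each monomial a fixed one of the same degree costs nothing, since the
    coefficients within each degree class sum to zero.\<close>
  define \<rho> where "\<rho> w = (SOME mon. mon \<in> ?K \<and> ?deg mon = w)" for w
  have \<rho>: "\<rho> (?deg mon) \<in> ?K \<and> ?deg (\<rho> (?deg mon)) = ?deg mon" if "mon \<in> ?K" for mon
    unfolding \<rho>_def by (rule someI_ex) (use that in blast)
  have "(\<Sum>mon\<in>?K. Poly_Mapping.single (\<rho> (?deg mon)) (?c mon)) = 0"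
    unfolding sum_single_group_by_degree laurent_coeff_toric_ideal[OF toric] by simp
  then have "p = (\<Sum>mon\<in>?K. Poly_Mapping.single 0 (?c mon)
                 * (Poly_Mapping.single mon 1 - Poly_Mapping.single (\<rho> (?deg mon)) 1))"
    using poly_mapping_sum_single[of p]
    by (simp add: right_diff_distrib mult_single sum_subtractf)
  also have "\<dots> \<in> cycle_ideal n m src tgt"
  proof (intro ideal_gen_sum[OF is_subring_Ering]
      ideal_gen_mult[OF is_subring_Ering single_zero_in_Ering])
    fix mon assume "mon \<in> ?K"
    with \<rho> Ering show "Poly_Mapping.single mon 1 - Poly_Mapping.single (\<rho> (?deg mon)) 1
        \<in> cycle_ideal n m src tgt"
      unfolding Ering_iff by (intro homogeneous_binomial_in_cycle_ideal[OF so]) auto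
  qed
  finally show "p \<in> cycle_ideal n m src tgt" .
qed

theorem corollary1:
  fixes n m :: nat and src tgt :: "nat \<Rightarrow> nat"
  assumes "simple_orientation n m src tgt"
  shows "(IE n m src tgt :: 'k::field_char_0 mpoly set) =
         ideal_gen (Ering m) {fC src tgt vs es | vs es. is_cycle n m src tgt vs es}"
  using IE_subset_cycle_ideal[OF assms] cycle_ideal_subset_IE[OF assms] by (rule subset_antisym)

end
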